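(* Let $n\ge1$, $p>1$, $\alpha\in\mathbb{R}$, $C>0$, $T>0$, and let $\psi$ be the unique positive solution of $\psi'=\psi^p\ln^\alpha(\psi^2+2)$ with $\psi(t)\to+\infty$ as $t\to T$. For each $T_2<T$ and $\delta>0$ there exists $\epsilon=\epsilon(T,T_2,\delta,n,p)>0$ such that if $v(x,t)$ satisfies $$|\partial_tv-\Delta v|\le C|v|^p\ln^\alpha(v^2+2)\quad\text{and}\quad |v(x,t)|\le\epsilon\,\psi(t)\qquad\text{for all }|x|\le\delta,\ t\in(T_2,T),$$ then $v$ does not blow up at $(0,T)$.
   Context: A function $v$ blows up at $(0,T)$ if there exist $(x_j,t_j)\to(0,T)$ with $|v(x_j,t_j)|\to+\infty$. *)

theory Defs
  imports "HOL-Analysis.Analysis"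
begin

definition time_deriv :: "(real^'n \<Rightarrow> real \<Rightarrow> real) \<Rightarrow> real^'n \<Rightarrow> real \<Rightarrow> real" where
  "time_deriv v x t = deriv (\<lambda>s. v x s) t"

definition second_partial :: "'n \<Rightarrow> (real^'n \<Rightarrow> real \<Rightarrow> real) \<Rightarrow> real^'n \<Rightarrow> real \<Rightarrow> real" where
  "second_partial i v x t = deriv (\<lambda>r. deriv (\<lambda>s. v (x + s *\<^sub>R axis i 1) t) r) 0"

definition laplacian :: "(real^'n \<Rightarrow> real \<Rightarrow> real) \<Rightarrow> real^'n \<Rightarrow> real \<Rightarrow> real" where
  "laplacian v x t = (\<Sum>i\<in>UNIV. second_partial i v x t)"

definition blows_up_at :: "(real^'n \<Rightarrow> real \<Rightarrow> real) \<Rightarrow> real \<Rightarrow> bool" where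
  "blows_up_at v T \<longleftrightarrow> (\<exists>xs ts. (xs \<longlonglongrightarrow> 0) \<and> (ts \<longlonglongrightarrow> T) \<and> (\<forall>j. ts j < T) \<and>
      filterlim (\<lambda>j. \<bar>v (xs j) (ts j)\<bar>) at_top sequentially)"

definition C21_on :: "(real^'n \<Rightarrow> real \<Rightarrow> real) \<Rightarrow> real \<Rightarrow> real \<Rightarrow> real \<Rightarrow> bool" where
  "C21_on v \<delta> T2 T \<longleftrightarrow>
     continuous_on (cball 0 \<delta> \<times> {T2<..<T}) (\<lambda>(x,t). v x t) \<and>
     continuous_on (cball 0 \<delta> \<times> {T2<..<T}) (\<lambda>(x,t). time_deriv v x t) \<and>
     (\<forall>i. continuous_on (cball 0 \<delta> \<times> {T2<..<T}) (\<lambda>(x,t). second_partial i v x t)) \<and>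
     (\<forall>x\<in>cball 0 \<delta>. \<forall>t\<in>{T2<..<T}.
        (\<lambda>s. v x s) differentiable (at t) \<and>
        (\<forall>i. (\<forall>r. (\<lambda>s. v (x + s *\<^sub>R axis i 1) t) differentiable (at r)) \<and>
             (\<lambda>r. deriv (\<lambda>s. v (x + s *\<^sub>R axis i 1) t) r) differentiable (at 0)))"

end

theory Submission
  imports Defs "HOL-Real_Asymp.Real_Asymp"
begin

text \<open>
  Write \<open>f(y) = y\<^sup>p ln\<^sup>\<alpha>(y\<^sup>2 + 2)\<close>. The solution is compared with the barrier
  \<open>W(x,t) = l \<psi>(t - \<mu>(\<delta>\<^sup>2 - |x|\<^sup>2)\<^sup>2)\<close>, which equals \<open>l \<psi>(t)\<close> on the sphere \<open>|x| = \<delta>\<close> but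
  stays bounded as \<open>t \<rightarrow> T\<close> on the smaller ball \<open>|x| \<le> \<delta>/2\<close>, where its time argument is shifted
  away from \<open>T\<close>. Since \<open>f\<close> is superlinear, \<open>C f(l y) \<le> l f(y)/4\<close> for small \<open>l\<close>, so the nonlinearity
  costs at most a quarter of \<open>W\<^sub>t = l f(\<psi>)\<close>. The Laplacian of \<open>W\<close> involves \<open>f'(\<psi>) \<le> K f(\<psi>)/\<psi>\<close>
  multiplied by the time shift, and the ODE gives \<open>(T - \<tau>) f(\<psi>(\<tau>))/\<psi>(\<tau>) \<le> B\<close>, so for small \<open>\<mu>\<close>
  it costs at most half of \<open>W\<^sub>t\<close>. Thus \<open>W\<close> is a strict supersolution, and a first-touching-point
  argument shows \<open>|v| \<le> W\<close> as soon as \<open>|v| < W\<close> on the parabolic boundary, which holds for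
  \<open>|v| \<le> \<epsilon> \<psi>\<close> with \<open>\<epsilon>\<close> small.
\<close>

section \<open>The nonlinearity\<close>

definition source :: "real \<Rightarrow> real \<Rightarrow> real \<Rightarrow> real" where
  "source p a y = y powr p * ln (y\<^sup>2 + 2) powr a"

definition source_deriv :: "real \<Rightarrow> real \<Rightarrow> real \<Rightarrow> real" where
  "source_deriv p a y = source p a y / y * (p + 2 * a * y\<^sup>2 / ((y\<^sup>2 + 2) * ln (y\<^sup>2 + 2)))"

lemma power2_add_two_pos: "0 < (y::real)\<^sup>2 + 2"
  using zero_le_power2[of y] by linarith

lemma ln_power2_add_two_ge: "ln 2 \<le> ln ((y::real)\<^sup>2 + 2)"
  by (subst ln_le_cancel_iff) (auto simp: add_nonneg_pos)

lemma ln_power2_add_two_pos: "0 < ln ((y::real)\<^sup>2 + 2)"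
  using ln_power2_add_two_ge[of y] ln_gt_zero[of 2] by linarith

lemma source_pos: "y > 0 \<Longrightarrow> source p a y > 0"
  unfolding source_def using ln_power2_add_two_pos[of y] by simp

lemma source_has_real_derivative:
  assumes "y > 0"
  shows "(source p a has_real_derivative source_deriv p a y) (at y)"
proof -
  have L: "ln (y\<^sup>2 + 2) > 0" by (rule ln_power2_add_two_pos)
  have Y: "y\<^sup>2 + 2 > 0" by (rule power2_add_two_pos)
  have "((\<lambda>y. y powr p * ln (y\<^sup>2 + 2) powr a) has_real_derivative
      p * y powr (p - 1) * ln (y\<^sup>2 + 2) powr a
      + y powr p * (a * ln (y\<^sup>2 + 2) powr (a - 1) * (2 * y / (y\<^sup>2 + 2)))) (at y)"
    using assms L Y by (auto intro!: derivative_eq_intros simp: field_simps)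
  also have "p * y powr (p - 1) * ln (y\<^sup>2 + 2) powr a
      + y powr p * (a * ln (y\<^sup>2 + 2) powr (a - 1) * (2 * y / (y\<^sup>2 + 2))) = source_deriv p a y"
    using assms L Y unfolding source_deriv_def source_def
    by (simp add: powr_diff field_simps power2_eq_square)
  finally show ?thesis unfolding source_def .
qed

lemma continuous_on_source: "continuous_on {0<..} (source p a)"
  by (intro continuous_at_imp_continuous_on) (auto intro: DERIV_isCont source_has_real_derivative)

lemma ln_powr_elasticity_le:
  "2 * a * y\<^sup>2 / ((y\<^sup>2 + 2) * ln (y\<^sup>2 + 2)) \<le> 2 * \<bar>a\<bar> / ln ((y::real)\<^sup>2 + 2)"
proof -
  have q: "0 \<le> y\<^sup>2 / (y\<^sup>2 + 2)" "y\<^sup>2 / (y\<^sup>2 + 2) \<le> 1" by (simp_all add: add_nonneg_pos)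
  have "a * (y\<^sup>2 / (y\<^sup>2 + 2)) \<le> \<bar>a\<bar> * (y\<^sup>2 / (y\<^sup>2 + 2))"
    using q by (intro mult_right_mono) auto
  also have "\<dots> \<le> \<bar>a\<bar>"
    using q by (intro mult_left_le) auto
  finally have "2 * (a * (y\<^sup>2 / (y\<^sup>2 + 2))) / ln (y\<^sup>2 + 2) \<le> 2 * \<bar>a\<bar> / ln (y\<^sup>2 + 2)"
    using ln_power2_add_two_pos[of y] by (intro divide_right_mono) auto
  then show ?thesis by simp
qed

lemma source_deriv_le:
  assumes "y > 0"
  shows "source_deriv p a y \<le> (p + 2 * \<bar>a\<bar> / ln 2) * (source p a y / y)"
proof -
  have "2 * \<bar>a\<bar> / ln (y\<^sup>2 + 2) \<le> 2 * \<bar>a\<bar> / ln 2"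
    using ln_power2_add_two_ge[of y] ln_power2_add_two_pos[of y]
    by (intro divide_left_mono) auto
  then have "p + 2 * a * y\<^sup>2 / ((y\<^sup>2 + 2) * ln (y\<^sup>2 + 2)) \<le> p + 2 * \<bar>a\<bar> / ln 2"
    using ln_powr_elasticity_le[of a y] by linarith
  moreover have "source p a y / y > 0"
    using source_pos[OF assms] assms by simp
  ultimately have "source p a y / y * (p + 2 * a * y\<^sup>2 / ((y\<^sup>2 + 2) * ln (y\<^sup>2 + 2)))
      \<le> source p a y / y * (p + 2 * \<bar>a\<bar> / ln 2)"
    by (intro mult_left_mono) auto
  then show ?thesis unfolding source_deriv_def by (simp only: mult.commute)
qed

lemma source_mono_large:
  assumes "g > 0" "exp (\<bar>a\<bar> / g) \<le> y1" "y1 \<le> y2"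
  shows "source g a y1 \<le> source g a y2"
proof (rule DERIV_nonneg_imp_nondecreasing[OF assms(3)])
  fix y assume y: "y1 \<le> y" "y \<le> y2"
  have y0: "y > 0" using y assms(2) exp_gt_zero[of "\<bar>a\<bar> / g"] by linarith
  have "\<bar>a\<bar> / g \<le> ln y"
    using y assms(2) y0 by (metis exp_le_cancel_iff exp_ln order_trans)
  also have "ln y = ln (y\<^sup>2) / 2" using y0 by (simp add: ln_realpow)
  also have "\<dots> \<le> ln (y\<^sup>2 + 2) / 2"
    using y0 by (intro divide_right_mono, subst ln_le_cancel_iff) (auto simp: add_nonneg_pos)
  finally have "2 * \<bar>a\<bar> / ln (y\<^sup>2 + 2) \<le> g"
    using assms(1) ln_power2_add_two_pos[of y] by (simp add: field_simps)
  moreover have "- (2 * a * y\<^sup>2 / ((y\<^sup>2 + 2) * ln (y\<^sup>2 + 2))) \<le> 2 * \<bar>a\<bar> / ln (y\<^sup>2 + 2)"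
    using ln_powr_elasticity_le[of "- a" y] by simp
  ultimately have "0 \<le> g + 2 * a * y\<^sup>2 / ((y\<^sup>2 + 2) * ln (y\<^sup>2 + 2))"
    by linarith
  then have "0 \<le> source_deriv g a y"
    unfolding source_deriv_def using source_pos[OF y0, of g a] y0 by simp
  then show "\<exists>d. (source g a has_real_derivative d) (at y) \<and> 0 \<le> d"
    using source_has_real_derivative[OF y0] by blast
qed

lemma source_div_self:
  assumes "y > 0"
  shows "source p a y / y = source ((p - 1) / 2) a y * y powr ((p - 1) / 2)"
proof -
  have "y powr p / y = y powr ((p - 1) / 2) * y powr ((p - 1) / 2)"
    using assms by (simp add: powr_diff flip: powr_add)
  then show ?thesis unfolding source_def by (simp add: ac_simps times_divide_eq_left [symmetric])
qed

lemma ln_power2_add_two_scaled: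
  fixes l y :: real
  assumes "0 < l" "l \<le> 1"
  shows "ln (y\<^sup>2 + 2) \<le> ln ((l * y)\<^sup>2 + 2) * (1 + 2 * ln (1 / l) / ln 2)"
proof -
  have "y\<^sup>2 + 2 \<le> (1 / l)\<^sup>2 * ((l * y)\<^sup>2 + 2)"
    using assms mult_le_one[of l l] by (simp add: field_simps power2_eq_square)
  then have "ln (y\<^sup>2 + 2) \<le> ln ((1 / l)\<^sup>2 * ((l * y)\<^sup>2 + 2))"
    using assms by (subst ln_le_cancel_iff) (auto simp: add_nonneg_pos)
  also have "\<dots> = 2 * ln (1 / l) + ln ((l * y)\<^sup>2 + 2)"
    using assms power2_add_two_pos[of "l * y"] by (simp add: ln_mult_pos ln_realpow)
  also have "2 * ln (1 / l) = ln 2 * (2 * ln (1 / l) / ln 2)"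
    by simp
  also have "\<dots> \<le> ln ((l * y)\<^sup>2 + 2) * (2 * ln (1 / l) / ln 2)"
    using assms ln_power2_add_two_ge[of "l * y"] by (intro mult_right_mono) auto
  finally show ?thesis by (simp add: algebra_simps)
qed

lemma ln_power2_add_two_scaled_powr:
  fixes l y :: real
  assumes "0 < l" "l \<le> 1"
  shows "ln ((l * y)\<^sup>2 + 2) powr a \<le> ln (y\<^sup>2 + 2) powr a * (1 + 2 * ln (1 / l) / ln 2) powr \<bar>a\<bar>"
proof -
  define R where "R = 1 + 2 * ln (1 / l) / ln 2"
  have R: "R \<ge> 1" using assms unfolding R_def by simp
  have L: "0 < ln (y\<^sup>2 + 2)" "0 < ln ((l * y)\<^sup>2 + 2)" by (rule ln_power2_add_two_pos)+
  show ?thesis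
  proof (cases "a \<ge> 0")
    case True
    have "l\<^sup>2 \<le> 1" using assms by (simp add: power_le_one)
    then have "(l * y)\<^sup>2 \<le> y\<^sup>2" by (simp add: power_mult_distrib mult_left_le_one_le)
    then have "ln ((l * y)\<^sup>2 + 2) \<le> ln (y\<^sup>2 + 2)" by (simp add: add_nonneg_pos)
    then have "ln ((l * y)\<^sup>2 + 2) powr a \<le> ln (y\<^sup>2 + 2) powr a"
      using True L by (intro powr_mono2) auto
    also have "\<dots> \<le> ln (y\<^sup>2 + 2) powr a * R powr \<bar>a\<bar>"
      using mult_left_mono[OF ge_one_powr_ge_zero[OF R abs_ge_zero], of "ln (y\<^sup>2 + 2) powr a"] by simp
    finally show ?thesis unfolding R_def .
  next
    case False
    have "ln (y\<^sup>2 + 2) / R \<le> ln ((l * y)\<^sup>2 + 2)"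
      using ln_power2_add_two_scaled[OF assms, of y] R unfolding R_def by (simp add: divide_le_eq)
    then have "ln ((l * y)\<^sup>2 + 2) powr a \<le> (ln (y\<^sup>2 + 2) / R) powr a"
      using False L R by (intro powr_mono2') auto
    also have "\<dots> = ln (y\<^sup>2 + 2) powr a * R powr \<bar>a\<bar>"
      using False L R by (simp add: powr_divide powr_minus_divide)
    finally show ?thesis unfolding R_def .
  qed
qed

lemma source_scaling:
  assumes "C > 0" "p > 1"
  shows "\<exists>l>0. \<forall>y>0. C * source p a (l * y) \<le> l * source p a y / 4"
proof -
  define R where "R = (\<lambda>l::real. 1 + 2 * ln (1 / l) / ln 2)"
  have "((\<lambda>l. C * l powr (p - 1) * R l powr \<bar>a\<bar>) \<longlongrightarrow> 0) (at_right 0)"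
    using assms unfolding R_def by real_asymp
  then have "\<forall>\<^sub>F l in at_right 0. C * l powr (p - 1) * R l powr \<bar>a\<bar> < 1 / 4"
    by (rule order_tendstoD) simp
  moreover have "\<forall>\<^sub>F l in at_right (0::real). l \<in> {0<..<1}"
    by (rule eventually_at_right_real) simp
  ultimately have "\<forall>\<^sub>F l in at_right 0. l \<in> {0<..<1} \<and> C * l powr (p - 1) * R l powr \<bar>a\<bar> < 1 / 4"
    by eventually_elim auto
  then obtain l where l: "0 < l" "l < 1" "C * l powr (p - 1) * R l powr \<bar>a\<bar> < 1 / 4"
    using eventually_happens[of _ "at_right (0::real)"] by auto
  have "C * source p a (l * y) \<le> l * source p a y / 4" if "y > 0" for y
  proof -
    have "C * source p a (l * y) = C * l powr p * y powr p * ln ((l * y)\<^sup>2 + 2) powr a"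
      unfolding source_def using l that by (simp add: powr_mult)
    also have "\<dots> \<le> C * l powr p * y powr p * (ln (y\<^sup>2 + 2) powr a * R l powr \<bar>a\<bar>)"
      using ln_power2_add_two_scaled_powr[of l y a] assms l unfolding R_def
      by (intro mult_left_mono) auto
    also have "\<dots> = (C * l powr (p - 1) * R l powr \<bar>a\<bar>) * (l * source p a y)"
      unfolding source_def using l by (simp add: powr_diff field_simps)
    also have "\<dots> \<le> 1 / 4 * (l * source p a y)"
      using l source_pos[OF that, of p a] by (intro mult_right_mono) auto
    finally show ?thesis by simp
  qed
  then show ?thesis using l by blast
qed

section \<open>A comparison principle for the heat operator\<close>

definition heat_differentiable_at :: "(real^'n \<Rightarrow> real \<Rightarrow> real) \<Rightarrow> real^'n \<Rightarrow> real \<Rightarrow> bool" where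
  "heat_differentiable_at v x t \<longleftrightarrow>
     (\<lambda>s. v x s) differentiable (at t) \<and>
     (\<forall>i. (\<forall>r. (\<lambda>s. v (x + s *\<^sub>R axis i 1) t) differentiable (at r)) \<and>
          (\<lambda>r. deriv (\<lambda>s. v (x + s *\<^sub>R axis i 1) t) r) differentiable (at 0))"

lemma C21_on_imp_heat_differentiable_at:
  "C21_on v \<delta> T2 T \<Longrightarrow> x \<in> cball 0 \<delta> \<Longrightarrow> t \<in> {T2<..<T} \<Longrightarrow> heat_differentiable_at v x t"
  unfolding C21_on_def heat_differentiable_at_def by blast

lemma deriv_cmult_real:
  fixes f :: "real \<Rightarrow> real"
  shows "f differentiable (at x) \<Longrightarrow> deriv (\<lambda>s. c * f s) x = c * deriv f x"
  by (intro DERIV_imp_deriv DERIV_cmult) (simp add: DERIV_deriv_iff_real_differentiable)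

lemma heat_differentiable_at_cmult:
  assumes "heat_differentiable_at v x t"
  shows "heat_differentiable_at (\<lambda>y s. c * v y s) x t"
    and "time_deriv (\<lambda>y s. c * v y s) x t = c * time_deriv v x t"
    and "laplacian (\<lambda>y s. c * v y s) x t = c * laplacian v x t"
proof -
  have line: "deriv (\<lambda>s. c * v (x + s *\<^sub>R axis i 1) t) = (\<lambda>r. c * deriv (\<lambda>s. v (x + s *\<^sub>R axis i 1) t) r)" for i
    using assms unfolding heat_differentiable_at_def by (intro ext deriv_cmult_real) blast
  show "heat_differentiable_at (\<lambda>y s. c * v y s) x t"
    using assms unfolding heat_differentiable_at_def line by simp
  show "time_deriv (\<lambda>y s. c * v y s) x t = c * time_deriv v x t"
    using assms unfolding heat_differentiable_at_def time_deriv_def by (simp add: deriv_cmult_real)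
  have "second_partial i (\<lambda>y s. c * v y s) x t = c * second_partial i v x t" for i
    using assms unfolding heat_differentiable_at_def second_partial_def line
    by (simp add: deriv_cmult_real)
  then show "laplacian (\<lambda>y s. c * v y s) x t = c * laplacian v x t"
    unfolding laplacian_def by (simp add: sum_distrib_left)
qed

lemma DERIV_left_local_min_nonpos:
  fixes k :: "real \<Rightarrow> real"
  assumes "(k has_real_derivative D) (at t)" "e > 0"
    and min: "\<And>s. t - e < s \<Longrightarrow> s < t \<Longrightarrow> k t \<le> k s"
  shows "D \<le> 0"
proof -
  have "\<forall>\<^sub>F s in at_left t. s \<in> {t - e<..<t}"
    using assms(2) by (intro eventually_at_left_real) simp
  then have "\<forall>\<^sub>F s in at_left t. (k s - k t) / (s - t) \<le> 0"
    by eventually_elim (use min in \<open>auto simp: divide_nonneg_neg\<close>)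
  moreover have "((\<lambda>s. (k s - k t) / (s - t)) \<longlongrightarrow> D) (at_left t)"
    using assms(1) unfolding has_field_derivative_iff by (rule filterlim_mono) (simp_all add: at_le)
  ultimately show ?thesis
    using tendsto_upperbound[of _ D "at_left t" 0] trivial_limit_at_left_real by blast
qed

lemma DERIV2_local_min_nonneg:
  fixes g g' :: "real \<Rightarrow> real"
  assumes g': "\<And>r. (g has_real_derivative g' r) (at r)" and g'': "(g' has_real_derivative D) (at 0)"
    and "e > 0" and min: "\<And>s. \<bar>s\<bar> < e \<Longrightarrow> g 0 \<le> g s"
  shows "D \<ge> 0"
proof (rule ccontr)
  assume "\<not> D \<ge> 0"
  have "g' 0 = 0"
    using DERIV_local_min[OF g' \<open>e > 0\<close>] min by auto
  then have "((\<lambda>s. g' s / s) \<longlongrightarrow> D) (at 0)"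
    using g'' by (simp add: has_field_derivative_iff)
  then have "\<forall>\<^sub>F s in at 0. g' s / s < 0"
    using \<open>\<not> D \<ge> 0\<close> by (intro order_tendstoD(2)) auto
  then obtain d where d: "d > 0" "\<And>s. s \<noteq> 0 \<Longrightarrow> dist s 0 < d \<Longrightarrow> g' s / s < 0"
    unfolding eventually_at by blast
  define s where "s = min d e / 2"
  have s: "0 < s" "s < d" "s < e" using d \<open>e > 0\<close> unfolding s_def by auto
  obtain z where z: "0 < z" "z < s" "g s - g 0 = s * g' z"
    using MVT2[OF s(1), of g g'] g' by auto
  have "g' z < 0" using d(2)[of z] z s by (simp add: divide_less_0_iff)
  then have "s * g' z < 0" using s by (simp add: mult_pos_neg)
  then have "g s < g 0" using z by simp
  with min[of s] s show False by simp
qed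

lemma heat_operator_le_at_touch:
  fixes u w :: "real^'n \<Rightarrow> real \<Rightarrow> real"
  assumes u: "heat_differentiable_at u x t" and w: "heat_differentiable_at w x t" and "e > 0"
    and below: "\<And>y s. dist y x < e \<Longrightarrow> t - e < s \<Longrightarrow> s \<le> t \<Longrightarrow> u y s \<le> w y s"
    and touch: "u x t = w x t"
  shows "time_deriv w x t - laplacian w x t \<le> time_deriv u x t - laplacian u x t"
proof -
  have "((\<lambda>s. w x s - u x s) has_real_derivative time_deriv w x t - time_deriv u x t) (at t)"
    using u w unfolding heat_differentiable_at_def time_deriv_def
    by (intro DERIV_diff) (simp_all add: DERIV_deriv_iff_real_differentiable)
  then have "time_deriv w x t - time_deriv u x t \<le> 0"
    by (rule DERIV_left_local_min_nonpos[OF _ \<open>e > 0\<close>]) (use below touch in auto)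
  moreover have "second_partial i u x t \<le> second_partial i w x t" for i
  proof -
    define U where "U = (\<lambda>r. u (x + r *\<^sub>R axis i 1) t)"
    define W where "W = (\<lambda>r. w (x + r *\<^sub>R axis i 1) t)"
    have U: "\<And>r. (U has_real_derivative deriv U r) (at r)"
      "(deriv U has_real_derivative second_partial i u x t) (at 0)"
      using u unfolding heat_differentiable_at_def second_partial_def U_def
      by (simp_all add: DERIV_deriv_iff_real_differentiable)
    have W: "\<And>r. (W has_real_derivative deriv W r) (at r)"
      "(deriv W has_real_derivative second_partial i w x t) (at 0)"
      using w unfolding heat_differentiable_at_def second_partial_def W_def
      by (simp_all add: DERIV_deriv_iff_real_differentiable)
    have "0 \<le> second_partial i w x t - second_partial i u x t"
    proof (rule DERIV2_local_min_nonneg[where g = "\<lambda>r. W r - U r" and g' = "\<lambda>r. deriv W r - deriv U r"])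
      show "\<And>r. ((\<lambda>r. W r - U r) has_real_derivative deriv W r - deriv U r) (at r)"
        using U W by (intro DERIV_diff)
      show "((\<lambda>r. deriv W r - deriv U r) has_real_derivative
          second_partial i w x t - second_partial i u x t) (at 0)"
        using U W by (intro DERIV_diff)
      show "W 0 - U 0 \<le> W s - U s" if "\<bar>s\<bar> < e" for s
        using below[of "x + s *\<^sub>R axis i 1" t] touch that \<open>e > 0\<close>
        unfolding U_def W_def by (simp add: dist_norm norm_axis_1)
    qed (rule \<open>e > 0\<close>)
    then show ?thesis by simp
  qed
  then have "laplacian u x t \<le> laplacian w x t"
    unfolding laplacian_def by (intro sum_mono)
  ultimately show ?thesis by simp
qed

lemma first_touch_point:
  fixes h :: "'a::euclidean_space \<times> real \<Rightarrow> real"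
  assumes "t0 \<le> t1" and cont: "continuous_on (cball 0 \<delta> \<times> {t0..t1}) h"
    and init: "\<And>y. y \<in> cball 0 \<delta> \<Longrightarrow> 0 < h (y, t0)"
    and lateral: "\<And>y s. norm y = \<delta> \<Longrightarrow> s \<in> {t0..t1} \<Longrightarrow> 0 < h (y, s)"
    and x: "x \<in> cball 0 \<delta>" "h (x, t1) \<le> 0"
  obtains xs ts where "norm xs < \<delta>" "t0 < ts" "ts \<le> t1" "h (xs, ts) = 0"
    "\<And>y s. y \<in> cball 0 \<delta> \<Longrightarrow> s \<in> {t0..ts} \<Longrightarrow> 0 \<le> h (y, s)"
proof -
  define D where "D = cball (0::'a) \<delta> \<times> {t0..t1}"
  define S where "S = D \<inter> h -` {..0}"
  have "compact S"
  proof -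
    have "closed S"
      unfolding S_def D_def using continuous_closed_preimage[OF cont] by (simp add: closed_Times)
    then show ?thesis
      using compact_Int_closed[of D S] unfolding D_def S_def by (auto simp: compact_Times Int_absorb)
  qed
  moreover have "(x, t1) \<in> S" unfolding S_def D_def using x \<open>t0 \<le> t1\<close> by simp
  ultimately obtain z where "z \<in> S" and z_min: "\<And>y. y \<in> S \<Longrightarrow> snd z \<le> snd y"
    using continuous_attains_inf[of S snd] continuous_on_snd[OF continuous_on_id] by blast
  then obtain xs ts where z: "z = (xs, ts)" "xs \<in> cball 0 \<delta>" "t0 \<le> ts" "ts \<le> t1" "h (xs, ts) \<le> 0"
    unfolding S_def D_def by (cases z) auto
  have "t0 < ts" using z init[of xs] by (cases "ts = t0") auto
  have "norm xs < \<delta>" using z lateral[of xs ts] by (cases "norm xs = \<delta>") auto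
  have before: "0 < h (y, s)" if "y \<in> cball 0 \<delta>" "s \<in> {t0..<ts}" for y s
    using z_min[of "(y, s)"] that z unfolding S_def D_def by (cases "h (y, s) \<le> 0") auto
  have nonneg: "0 \<le> h (y, s)" if y: "y \<in> cball 0 \<delta>" and s: "s \<in> {t0..ts}" for y s
  proof (rule continuous_ge_on_closure[of "{t0..<ts}" "\<lambda>s. h (y, s)"])
    show "continuous_on (closure {t0..<ts}) (\<lambda>s. h (y, s))"
      using \<open>t0 < ts\<close> z y by (intro continuous_on_compose2[OF cont]) (auto intro!: continuous_intros)
    show "s \<in> closure {t0..<ts}" using \<open>t0 < ts\<close> s by simp
  qed (use before y in \<open>auto intro: less_imp_le\<close>)
  have "h (xs, ts) = 0" using z nonneg[of xs ts] by simp
  then show ?thesis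
    using that[of xs ts] \<open>norm xs < \<delta>\<close> \<open>t0 < ts\<close> \<open>ts \<le> t1\<close> nonneg by blast
qed

lemma heat_comparison:
  fixes v w :: "real^'n \<Rightarrow> real \<Rightarrow> real" and g :: "real \<Rightarrow> real"
  assumes cont: "continuous_on (cball 0 \<delta> \<times> {t\<^sub>0..<T}) (\<lambda>(x, t). v x t)"
      "continuous_on (cball 0 \<delta> \<times> {t\<^sub>0..<T}) (\<lambda>(x, t). w x t)"
    and diff: "\<And>x t. x \<in> ball 0 \<delta> \<Longrightarrow> t \<in> {t\<^sub>0<..<T} \<Longrightarrow>
      heat_differentiable_at v x t \<and> heat_differentiable_at w x t"
    and sub: "\<And>x t. x \<in> ball 0 \<delta> \<Longrightarrow> t \<in> {t\<^sub>0<..<T} \<Longrightarrow>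
      \<bar>time_deriv v x t - laplacian v x t\<bar> \<le> g \<bar>v x t\<bar>"
    and super: "\<And>x t. x \<in> ball 0 \<delta> \<Longrightarrow> t \<in> {t\<^sub>0<..<T} \<Longrightarrow>
      g \<bar>w x t\<bar> < time_deriv w x t - laplacian w x t"
    and init: "\<And>x. x \<in> cball 0 \<delta> \<Longrightarrow> \<bar>v x t\<^sub>0\<bar> < w x t\<^sub>0"
    and lateral: "\<And>x t. norm x = \<delta> \<Longrightarrow> t \<in> {t\<^sub>0..<T} \<Longrightarrow> \<bar>v x t\<bar> < w x t"
    and x: "x \<in> cball 0 \<delta>" and t: "t \<in> {t\<^sub>0..<T}"
  shows "\<bar>v x t\<bar> \<le> w x t"
proof -
  have "\<sigma> * v x t \<le> w x t" if "\<bar>\<sigma>\<bar> = 1" for \<sigma>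
  proof (rule ccontr)
    assume "\<not> \<sigma> * v x t \<le> w x t"
    have le_abs: "\<sigma> * a \<le> \<bar>a\<bar>" for a
      using \<open>\<bar>\<sigma>\<bar> = 1\<close> abs_ge_self[of "\<sigma> * a"] by (simp add: abs_mult)
    define h where "h = (\<lambda>(y, s). w y s - \<sigma> * v y s)"
    have "cball 0 \<delta> \<times> {t\<^sub>0..t} \<subseteq> cball 0 \<delta> \<times> {t\<^sub>0..<T}" using t by auto
    then have cont_h: "continuous_on (cball 0 \<delta> \<times> {t\<^sub>0..t}) h"
      using cont unfolding h_def case_prod_beta
      by (intro continuous_intros) (blast intro: continuous_on_subset)+
    obtain xs ts where xs: "norm xs < \<delta>" and ts: "t\<^sub>0 < ts" "ts \<le> t" and "h (xs, ts) = 0"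
      and nonneg: "\<And>y s. y \<in> cball 0 \<delta> \<Longrightarrow> s \<in> {t\<^sub>0..ts} \<Longrightarrow> 0 \<le> h (y, s)"
    proof (rule first_touch_point[OF _ cont_h])
      show "0 < h (y, t\<^sub>0)" if "y \<in> cball 0 \<delta>" for y
        using le_abs[of "v y t\<^sub>0"] init[OF that] unfolding h_def by simp
      show "0 < h (y, s)" if "norm y = \<delta>" "s \<in> {t\<^sub>0..t}" for y s
        using le_abs[of "v y s"] lateral[of y s] that t unfolding h_def by simp
    qed (use t x \<open>\<not> \<sigma> * v x t \<le> w x t\<close> in \<open>auto simp: h_def\<close>)
    then have touch: "\<sigma> * v xs ts = w xs ts" unfolding h_def by simp
    have in_domain: "xs \<in> ball 0 \<delta>" "ts \<in> {t\<^sub>0<..<T}" using xs ts t by auto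
    define u where "u = (\<lambda>y s. \<sigma> * v y s)"
    have "time_deriv w xs ts - laplacian w xs ts \<le> time_deriv u xs ts - laplacian u xs ts"
    proof (rule heat_operator_le_at_touch[where e = "min (\<delta> - norm xs) (ts - t\<^sub>0)"])
      show "u y s \<le> w y s" if "dist y xs < min (\<delta> - norm xs) (ts - t\<^sub>0)"
        "ts - min (\<delta> - norm xs) (ts - t\<^sub>0) < s" "s \<le> ts" for y s
      proof -
        have "norm y \<le> \<delta>" using that norm_triangle_ineq2[of y xs] by (simp add: dist_norm)
        then show ?thesis using nonneg[of y s] that unfolding h_def u_def by simp
      qed
    qed (use diff[OF in_domain] heat_differentiable_at_cmult touch xs ts in \<open>auto simp: u_def\<close>)
    also have "\<dots> = \<sigma> * (time_deriv v xs ts - laplacian v xs ts)"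
      using heat_differentiable_at_cmult(2,3)[of v xs ts \<sigma>] diff[OF in_domain]
      unfolding u_def by (simp add: right_diff_distrib)
    also have "\<dots> \<le> g \<bar>v xs ts\<bar>"
      using le_abs sub[OF in_domain] order_trans by blast
    also have "\<bar>v xs ts\<bar> = \<bar>w xs ts\<bar>"
      using touch \<open>\<bar>\<sigma>\<bar> = 1\<close> by (metis abs_mult mult_1)
    finally show False using super[OF in_domain] by simp
  qed
  from this[of 1] this[of "-1"] show ?thesis by auto
qed

lemma not_blows_up_at_if_bounded:
  fixes v :: "real^'n \<Rightarrow> real \<Rightarrow> real"
  assumes "r > 0" "t1 < T"
    and bound: "\<And>x t. norm x < r \<Longrightarrow> t1 < t \<Longrightarrow> t < T \<Longrightarrow> \<bar>v x t\<bar> \<le> M"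
  shows "\<not> blows_up_at v T"
proof
  assume "blows_up_at v T"
  then obtain xs ts where xs: "xs \<longlonglongrightarrow> 0" and ts: "ts \<longlonglongrightarrow> T" "\<And>j. ts j < T"
    and large: "filterlim (\<lambda>j. \<bar>v (xs j) (ts j)\<bar>) at_top sequentially"
    unfolding blows_up_at_def by blast
  have "\<forall>\<^sub>F j in sequentially. norm (xs j) < r"
    using tendsto_norm[OF xs] \<open>r > 0\<close> by (intro order_tendstoD(2)) auto
  moreover have "\<forall>\<^sub>F j in sequentially. t1 < ts j"
    using ts(1) \<open>t1 < T\<close> by (rule order_tendstoD(1))
  moreover have "\<forall>\<^sub>F j in sequentially. M < \<bar>v (xs j) (ts j)\<bar>"
    using large by (simp add: filterlim_at_top_dense)
  ultimately have "\<forall>\<^sub>F j in sequentially. False"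
  proof eventually_elim
    case (elim j)
    then show False using bound[of "xs j" "ts j"] ts(2)[of j] by simp
  qed
  then show False by simp
qed

section \<open>Solutions of the ODE\<close>

locale source_ode_solution =
  fixes p a T :: real and \<psi> :: "real \<Rightarrow> real"
  assumes pos: "\<And>t. t < T \<Longrightarrow> 0 < \<psi> t"
    and ode: "\<And>t. t < T \<Longrightarrow> (\<psi> has_real_derivative source p a (\<psi> t)) (at t)"
begin

lemma mono:
  assumes "t1 \<le> t2" "t2 < T"
  shows "\<psi> t1 \<le> \<psi> t2"
proof (rule DERIV_nonneg_imp_nondecreasing[OF assms(1)])
  fix t assume "t1 \<le> t" "t \<le> t2"
  then have "t < T" using assms(2) by simp
  then show "\<exists>y. (\<psi> has_real_derivative y) (at t) \<and> 0 \<le> y"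
    using ode pos source_pos less_imp_le by blast
qed

lemma continuous_on: "S \<subseteq> {..<T} \<Longrightarrow> continuous_on S \<psi>"
  by (intro continuous_at_imp_continuous_on) (auto intro: DERIV_isCont ode)

lemma neg_powr_has_real_derivative:
  assumes "t < T"
  shows "((\<lambda>t. \<psi> t powr (- g)) has_real_derivative - g * source (p - g - 1) a (\<psi> t)) (at t)"
proof -
  have "((\<lambda>t. \<psi> t powr (- g)) has_real_derivative - g * \<psi> t powr (- g - 1) * source p a (\<psi> t)) (at t)"
    using ode[OF assms] pos[OF assms] by (auto intro!: derivative_eq_intros)
  moreover have "\<psi> t powr (- g - 1) * source p a (\<psi> t) = source (p - g - 1) a (\<psi> t)"
    using pos[OF assms] unfolding source_def by (simp add: powr_add[symmetric] field_simps)
  ultimately show ?thesis by (simp add: mult.assoc)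
qed

text \<open>With \<open>g = (p - 1)/2\<close>, the positive function \<open>\<psi>\<^sup>-\<^sup>g\<close> decreases at rate \<open>g f\<^sub>g(\<psi>)\<close>,
  which is nondecreasing in time once \<open>\<psi>\<close> is large.\<close>

lemma elapsed_time_bound:
  assumes "p > 1" "\<tau> < \<sigma>" "\<sigma> < T" "exp (2 * \<bar>a\<bar> / (p - 1)) \<le> \<psi> \<tau>"
  shows "(\<sigma> - \<tau>) * ((p - 1) / 2 * source ((p - 1) / 2) a (\<psi> \<tau>)) < \<psi> \<tau> powr (- ((p - 1) / 2))"
proof -
  define g where "g = (p - 1) / 2"
  have "g > 0" using assms(1) unfolding g_def by simp
  have "p - g - 1 = g" unfolding g_def by (simp add: field_simps)
  then have "\<And>t. \<tau> \<le> t \<Longrightarrow> t \<le> \<sigma> \<Longrightarrow>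
      ((\<lambda>t. \<psi> t powr (- g)) has_real_derivative - g * source g a (\<psi> t)) (at t)"
    using neg_powr_has_real_derivative[of _ g] assms(3) by (metis order_le_less_trans)
  from MVT2[OF assms(2) this] obtain z where z: "\<tau> < z" "z < \<sigma>"
    and mvt: "\<psi> \<sigma> powr (- g) - \<psi> \<tau> powr (- g) = (\<sigma> - \<tau>) * (- g * source g a (\<psi> z))"
    by blast
  have "\<bar>a\<bar> / g = 2 * \<bar>a\<bar> / (p - 1)" unfolding g_def by simp
  then have "source g a (\<psi> \<tau>) \<le> source g a (\<psi> z)"
    using source_mono_large[OF \<open>g > 0\<close>, of a "\<psi> \<tau>" "\<psi> z"] assms(3,4) mono[of \<tau> z] z by simp
  then have "(\<sigma> - \<tau>) * (g * source g a (\<psi> \<tau>)) \<le> (\<sigma> - \<tau>) * (g * source g a (\<psi> z))"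
    using assms(2) \<open>g > 0\<close> by (intro mult_left_mono) auto
  also have "\<dots> = \<psi> \<tau> powr (- g) - \<psi> \<sigma> powr (- g)"
    using mvt by (simp add: algebra_simps)
  also have "\<dots> < \<psi> \<tau> powr (- g)"
    using pos[of \<sigma>] assms(3) by simp
  finally show ?thesis unfolding g_def .
qed

lemma remaining_time_le:
  assumes "p > 1" "\<tau> < T" "exp (2 * \<bar>a\<bar> / (p - 1)) \<le> \<psi> \<tau>"
  shows "(T - \<tau>) * (source p a (\<psi> \<tau>) / \<psi> \<tau>) \<le> 2 / (p - 1)"
proof -
  define g where "g = (p - 1) / 2"
  define c where "c = g * source g a (\<psi> \<tau>)"
  have "g > 0" using assms(1) unfolding g_def by simp
  have \<psi>\<tau>: "\<psi> \<tau> > 0" using pos[OF assms(2)] .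
  have "c > 0" unfolding c_def using \<open>g > 0\<close> source_pos[OF \<psi>\<tau>] by simp
  have "T \<le> \<tau> + \<psi> \<tau> powr (- g) / c"
  proof (rule dense_le_bounded[OF assms(2)])
    fix \<sigma> assume "\<tau> < \<sigma>" "\<sigma> < T"
    then have "(\<sigma> - \<tau>) * c < \<psi> \<tau> powr (- g)"
      using elapsed_time_bound[OF assms(1) _ _ assms(3)] unfolding c_def g_def by blast
    then show "\<sigma> \<le> \<tau> + \<psi> \<tau> powr (- g) / c"
      using \<open>c > 0\<close> by (simp add: field_simps)
  qed
  then have "(T - \<tau>) * c \<le> \<psi> \<tau> powr (- g)"
    using \<open>c > 0\<close> by (simp add: field_simps)
  then have "(T - \<tau>) * c * \<psi> \<tau> powr g \<le> \<psi> \<tau> powr (- g) * \<psi> \<tau> powr g"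
    by (rule mult_right_mono) simp
  also have "\<psi> \<tau> powr (- g) * \<psi> \<tau> powr g = 1"
    using \<psi>\<tau> by (simp flip: powr_add)
  finally show ?thesis
    using source_div_self[OF \<psi>\<tau>, of p a] \<open>g > 0\<close> unfolding c_def g_def by (simp add: field_simps)
qed

end

locale blowup_solution = source_ode_solution +
  assumes exponent_gt_one: "p > 1" and blowup: "filterlim \<psi> at_top (at_left T)"
begin

lemma remaining_time_bounded:
  assumes "t0 < T"
  obtains B where "B \<ge> 0" "\<And>\<tau>. t0 \<le> \<tau> \<Longrightarrow> \<tau> < T \<Longrightarrow> (T - \<tau>) * (source p a (\<psi> \<tau>) / \<psi> \<tau>) \<le> B"
proof -
  define rate where "rate = (\<lambda>\<tau>. (T - \<tau>) * (source p a (\<psi> \<tau>) / \<psi> \<tau>))"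
  have "\<forall>\<^sub>F t in at_left T. exp (2 * \<bar>a\<bar> / (p - 1)) \<le> \<psi> t"
    using blowup by (simp add: filterlim_at_top)
  then obtain b where "b < T" and large: "\<And>t. b < t \<Longrightarrow> t < T \<Longrightarrow> exp (2 * \<bar>a\<bar> / (p - 1)) \<le> \<psi> t"
    unfolding eventually_at_left_field by auto
  define t1 where "t1 = max t0 ((b + T) / 2)"
  have t1: "t0 \<le> t1" "b < t1" "t1 < T"
    using \<open>b < T\<close> assms unfolding t1_def by (auto simp: less_max_iff_disj)
  have "continuous_on {t0..t1} rate"
  proof -
    have "continuous_on {t0..t1} \<psi>" using t1 by (intro continuous_on) auto
    moreover have "continuous_on {t0..t1} (\<lambda>\<tau>. source p a (\<psi> \<tau>))"
      using t1 pos by (intro continuous_on_compose2[OF continuous_on_source \<open>continuous_on {t0..t1} \<psi>\<close>]) auto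
    ultimately show ?thesis
      unfolding rate_def using t1 pos by (intro continuous_intros) (auto simp: less_imp_neq[symmetric])
  qed
  then obtain B1 where B1: "\<And>\<tau>. \<tau> \<in> {t0..t1} \<Longrightarrow> rate \<tau> \<le> B1"
    using continuous_attains_sup[of "{t0..t1}" rate] t1 by fastforce
  have "rate \<tau> \<le> max (max B1 (2 / (p - 1))) 0" if "t0 \<le> \<tau>" "\<tau> < T" for \<tau>
  proof (cases "\<tau> \<le> t1")
    case True
    then show ?thesis using B1[of \<tau>] that by simp
  next
    case False
    then have "rate \<tau> \<le> 2 / (p - 1)"
      unfolding rate_def using remaining_time_le[OF exponent_gt_one] large[of \<tau>] that t1 by simp
    then show ?thesis by simp
  qed
  then show ?thesis using that[of "max (max B1 (2 / (p - 1))) 0"] unfolding rate_def by simp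
qed

end

section \<open>The barrier\<close>

lemma diff_mult_power2_less:
  fixes \<mu> c t T :: real
  assumes "0 \<le> \<mu>" "t < T"
  shows "t - \<mu> * c\<^sup>2 < T"
  using assms mult_nonneg_nonneg[OF assms(1) zero_le_power2[of c]] by linarith

definition barrier :: "(real \<Rightarrow> real) \<Rightarrow> real \<Rightarrow> real \<Rightarrow> real \<Rightarrow> real^'n \<Rightarrow> real \<Rightarrow> real" where
  "barrier \<psi> l \<mu> \<delta> x t = l * \<psi> (t - \<mu> * (\<delta>\<^sup>2 - (norm x)\<^sup>2)\<^sup>2)"

lemma norm_add_scaleR_axis_power2:
  "(norm (x + s *\<^sub>R axis i 1 :: real^'n))\<^sup>2 = (norm x)\<^sup>2 + 2 * s * x $ i + s\<^sup>2"
proof -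
  have "(norm (x + s *\<^sub>R axis i 1))\<^sup>2 = (x + s *\<^sub>R axis i 1) \<bullet> (x + s *\<^sub>R axis i 1)"
    by (rule power2_norm_eq_inner)
  also have "\<dots> = x \<bullet> x + 2 * s * (x \<bullet> axis i 1) + s\<^sup>2 * (axis i 1 \<bullet> axis i (1::real))"
    by (simp add: inner_add_left inner_add_right inner_commute algebra_simps power2_eq_square)
  finally show ?thesis
    by (simp add: inner_axis inner_axis_axis power2_norm_eq_inner)
qed

context source_ode_solution
begin

lemma barrier_line_derivatives:
  fixes x :: "real^'n" and i :: 'n and \<delta> l \<mu> t :: real
  assumes "\<mu> \<ge> 0" "t < T"
  defines "Q \<equiv> \<lambda>r. \<delta>\<^sup>2 - (norm x)\<^sup>2 - 2 * r * x $ i - r\<^sup>2"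
  defines "D \<equiv> \<lambda>r. l * source p a (\<psi> (t - \<mu> * (Q r)\<^sup>2)) * (4 * \<mu> * Q r * (x $ i + r))"
  shows "\<And>r. ((\<lambda>r. barrier \<psi> l \<mu> \<delta> (x + r *\<^sub>R axis i 1) t) has_real_derivative D r) (at r)"
    and "(D has_real_derivative l * source p a (\<psi> (t - \<mu> * (Q 0)\<^sup>2)) *
      (source_deriv p a (\<psi> (t - \<mu> * (Q 0)\<^sup>2)) * (4 * \<mu> * Q 0 * x $ i)\<^sup>2 + 4 * \<mu> * (Q 0 - 2 * (x $ i)\<^sup>2))) (at 0)"
proof -
  have before_T: "t - \<mu> * (Q r)\<^sup>2 < T" for r
    using assms(1,2) by (rule diff_mult_power2_less)
  have Q: "(Q has_real_derivative - 2 * x $ i - 2 * r) (at r)" for r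
    unfolding Q_def by (auto intro!: derivative_eq_intros)
  have time_line: "((\<lambda>r. t - \<mu> * (Q r)\<^sup>2) has_real_derivative 4 * \<mu> * Q r * (x $ i + r)) (at r)" for r
    by (auto intro!: derivative_eq_intros Q simp: algebra_simps power2_eq_square)
  have \<psi>_line: "((\<lambda>r. \<psi> (t - \<mu> * (Q r)\<^sup>2)) has_real_derivative
      source p a (\<psi> (t - \<mu> * (Q r)\<^sup>2)) * (4 * \<mu> * Q r * (x $ i + r))) (at r)" for r
    using DERIV_chain2[OF ode[OF before_T] time_line] .
  have "barrier \<psi> l \<mu> \<delta> (x + r *\<^sub>R axis i 1) t = l * \<psi> (t - \<mu> * (Q r)\<^sup>2)" for r
    unfolding barrier_def Q_def by (simp add: norm_add_scaleR_axis_power2 algebra_simps)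
  then show "((\<lambda>r. barrier \<psi> l \<mu> \<delta> (x + r *\<^sub>R axis i 1) t) has_real_derivative D r) (at r)" for r
    unfolding D_def using DERIV_cmult[OF \<psi>_line, of l] by (simp add: mult.assoc)
  have source_line: "((\<lambda>r. source p a (\<psi> (t - \<mu> * (Q r)\<^sup>2))) has_real_derivative
      source_deriv p a (\<psi> (t - \<mu> * (Q r)\<^sup>2)) *
      (source p a (\<psi> (t - \<mu> * (Q r)\<^sup>2)) * (4 * \<mu> * Q r * (x $ i + r)))) (at r)" for r
    using DERIV_chain2[OF source_has_real_derivative[OF pos[OF before_T]] \<psi>_line] .
  have "((\<lambda>r. 4 * \<mu> * Q r * (x $ i + r)) has_real_derivative
      4 * \<mu> * ((- 2 * x $ i - 2 * r) * (x $ i + r) + Q r)) (at r)" for r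
    by (auto intro!: derivative_eq_intros Q simp: algebra_simps)
  from DERIV_mult[OF DERIV_cmult[OF source_line[of 0], of l] this[of 0]]
  show "(D has_real_derivative l * source p a (\<psi> (t - \<mu> * (Q 0)\<^sup>2)) *
      (source_deriv p a (\<psi> (t - \<mu> * (Q 0)\<^sup>2)) * (4 * \<mu> * Q 0 * x $ i)\<^sup>2 + 4 * \<mu> * (Q 0 - 2 * (x $ i)\<^sup>2))) (at 0)"
    unfolding D_def by (simp add: algebra_simps power2_eq_square)
qed

lemma barrier_heat_derivatives:
  fixes x :: "real^'n" and \<delta> l \<mu> t :: real
  assumes "\<mu> \<ge> 0" "t < T"
  defines "(q::real) \<equiv> \<delta>\<^sup>2 - (norm x)\<^sup>2"
  defines "F \<equiv> source p a (\<psi> (t - \<mu> * q\<^sup>2))" and "F' \<equiv> source_deriv p a (\<psi> (t - \<mu> * q\<^sup>2))"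
  shows "heat_differentiable_at (barrier \<psi> l \<mu> \<delta>) x t"
    and "time_deriv (barrier \<psi> l \<mu> \<delta>) x t = l * F"
    and "laplacian (barrier \<psi> l \<mu> \<delta>) x t =
      l * F * (F' * (16 * \<mu>\<^sup>2 * q\<^sup>2 * (norm x)\<^sup>2) + 4 * \<mu> * (real CARD('n) * q - 2 * (norm x)\<^sup>2))"
proof -
  have "t - \<mu> * q\<^sup>2 < T"
    using assms(1,2) by (rule diff_mult_power2_less)
  moreover have "((\<lambda>s. s - \<mu> * q\<^sup>2) has_real_derivative 1) (at t)"
    by (auto intro!: derivative_eq_intros)
  ultimately have time: "((\<lambda>s. barrier \<psi> l \<mu> \<delta> x s) has_real_derivative l * F) (at t)"
    unfolding barrier_def F_def q_def using DERIV_chain2[OF ode] DERIV_cmult by fastforce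
  define D where "D = (\<lambda>i r. l * source p a (\<psi> (t - \<mu> * (\<delta>\<^sup>2 - (norm x)\<^sup>2 - 2 * r * x $ i - r\<^sup>2)\<^sup>2)) *
    (4 * \<mu> * (\<delta>\<^sup>2 - (norm x)\<^sup>2 - 2 * r * x $ i - r\<^sup>2) * (x $ i + r)))"
  define D2 where "D2 = (\<lambda>i. l * F * (F' * (4 * \<mu> * q * x $ i)\<^sup>2 + 4 * \<mu> * (q - 2 * (x $ i)\<^sup>2)))"
  have line: "((\<lambda>r. barrier \<psi> l \<mu> \<delta> (x + r *\<^sub>R axis i 1) t) has_real_derivative D i r) (at r)" for i r
    using barrier_line_derivatives(1)[OF assms(1,2), where x = x and i = i and \<delta> = \<delta> and l = l] unfolding D_def by simp
  then have deriv_line: "deriv (\<lambda>r. barrier \<psi> l \<mu> \<delta> (x + r *\<^sub>R axis i 1) t) = D i" for i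
    by (intro ext DERIV_imp_deriv)
  have line2: "(D i has_real_derivative D2 i) (at 0)" for i
    using barrier_line_derivatives(2)[OF assms(1,2), where x = x and i = i and \<delta> = \<delta> and l = l]
    unfolding D_def D2_def F_def F'_def q_def by simp
  show "heat_differentiable_at (barrier \<psi> l \<mu> \<delta>) x t"
    unfolding heat_differentiable_at_def deriv_line
    using time line line2 real_differentiable_def by blast
  show "time_deriv (barrier \<psi> l \<mu> \<delta>) x t = l * F"
    unfolding time_deriv_def using time by (rule DERIV_imp_deriv)
  have "second_partial i (barrier \<psi> l \<mu> \<delta>) x t = D2 i" for i
    unfolding second_partial_def deriv_line using line2 by (rule DERIV_imp_deriv)
  moreover have sum_sq: "(\<Sum>i\<in>UNIV. (x $ i)\<^sup>2) = (norm x)\<^sup>2"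
    unfolding power2_norm_eq_inner by (simp add: inner_vec_def power2_eq_square)
  ultimately have "laplacian (barrier \<psi> l \<mu> \<delta>) x t =
      (\<Sum>i\<in>UNIV. l * F * (F' * 16 * \<mu>\<^sup>2 * q\<^sup>2) * (x $ i)\<^sup>2 + l * F * 4 * \<mu> * q - l * F * 8 * \<mu> * (x $ i)\<^sup>2)"
    unfolding laplacian_def D2_def by (intro sum.cong) (auto simp: algebra_simps power2_eq_square)
  also have "\<dots> = l * F * (F' * (16 * \<mu>\<^sup>2 * q\<^sup>2 * (norm x)\<^sup>2) + 4 * \<mu> * (real CARD('n) * q - 2 * (norm x)\<^sup>2))"
    by (simp add: sum.distrib sum_subtractf sum_sq flip: sum_distrib_left) (simp add: algebra_simps)
  finally show "laplacian (barrier \<psi> l \<mu> \<delta>) x t =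
      l * F * (F' * (16 * \<mu>\<^sup>2 * q\<^sup>2 * (norm x)\<^sup>2) + 4 * \<mu> * (real CARD('n) * q - 2 * (norm x)\<^sup>2))" .
qed

lemma continuous_on_barrier:
  assumes "\<mu> \<ge> 0"
  shows "continuous_on (S \<times> {..<T}) (\<lambda>(x, t). barrier \<psi> l \<mu> \<delta> x t)"
proof -
  have "(\<lambda>(x, t). t - \<mu> * (\<delta>\<^sup>2 - (norm x)\<^sup>2)\<^sup>2) ` (S \<times> {..<T}) \<subseteq> {..<T}"
    using assms diff_mult_power2_less by auto
  then have "continuous_on (S \<times> {..<T}) (\<lambda>z. \<psi> (snd z - \<mu> * (\<delta>\<^sup>2 - (norm (fst z))\<^sup>2)\<^sup>2))"
    by (intro continuous_on_compose2[OF continuous_on[OF order_refl]] continuous_intros) (auto simp: case_prod_beta)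
  then show ?thesis
    unfolding barrier_def case_prod_beta by (intro continuous_intros)
qed

lemma barrier_le_near_centre:
  assumes "l \<ge> 0" "\<mu> > 0" "0 \<le> r" "r < \<delta>" "norm x \<le> r" "t < T"
  shows "barrier \<psi> l \<mu> \<delta> x t \<le> l * \<psi> (T - \<mu> * (\<delta>\<^sup>2 - r\<^sup>2)\<^sup>2)"
proof -
  have "r\<^sup>2 < \<delta>\<^sup>2" "(norm x)\<^sup>2 \<le> r\<^sup>2" using assms(3-5) by (auto intro: power_strict_mono power_mono)
  then have "(\<delta>\<^sup>2 - r\<^sup>2)\<^sup>2 \<le> (\<delta>\<^sup>2 - (norm x)\<^sup>2)\<^sup>2" "0 < (\<delta>\<^sup>2 - r\<^sup>2)\<^sup>2"
    by (auto intro: power_mono)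
  then have "\<mu> * (\<delta>\<^sup>2 - r\<^sup>2)\<^sup>2 \<le> \<mu> * (\<delta>\<^sup>2 - (norm x)\<^sup>2)\<^sup>2" "0 < \<mu> * (\<delta>\<^sup>2 - r\<^sup>2)\<^sup>2"
    using assms(2) by (auto intro: mult_left_mono)
  then have "t - \<mu> * (\<delta>\<^sup>2 - (norm x)\<^sup>2)\<^sup>2 \<le> T - \<mu> * (\<delta>\<^sup>2 - r\<^sup>2)\<^sup>2" "T - \<mu> * (\<delta>\<^sup>2 - r\<^sup>2)\<^sup>2 < T"
    using assms(6) by linarith+
  then show ?thesis
    unfolding barrier_def using assms(1) mono by (auto intro: mult_left_mono)
qed

lemma small_multiple_below_barrier:
  fixes \<delta> :: real
  assumes "l > 0" "\<mu> \<ge> 0" "t0 < T"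
  obtains \<epsilon> where "\<epsilon> > 0"
    "\<And>x :: real^'n. x \<in> cball 0 \<delta> \<Longrightarrow> \<epsilon> * \<psi> t0 < barrier \<psi> l \<mu> \<delta> x t0"
    "\<And>(x :: real^'n) t. norm x = \<delta> \<Longrightarrow> t0 \<le> t \<Longrightarrow> t < T \<Longrightarrow> \<epsilon> * \<psi> t < barrier \<psi> l \<mu> \<delta> x t"
proof
  define \<psi>0 where "\<psi>0 = \<psi> (t0 - \<mu> * (\<delta>\<^sup>2)\<^sup>2)"
  have "t0 - \<mu> * (\<delta>\<^sup>2)\<^sup>2 \<le> t0" using assms(2) by simp
  then have "0 < \<psi>0" "\<psi>0 \<le> \<psi> t0" "0 < \<psi> t0"
    unfolding \<psi>0_def using assms(3) pos mono by auto
  show "0 < l * \<psi>0 / (2 * \<psi> t0)" using assms(1) \<open>0 < \<psi>0\<close> \<open>0 < \<psi> t0\<close> by simp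
  show "l * \<psi>0 / (2 * \<psi> t0) * \<psi> t0 < barrier \<psi> l \<mu> \<delta> x t0" if "x \<in> cball 0 \<delta>" for x :: "real^'n"
  proof -
    have "(norm x)\<^sup>2 \<le> \<delta>\<^sup>2" using that by (simp add: power_mono)
    then have "(\<delta>\<^sup>2 - (norm x)\<^sup>2)\<^sup>2 \<le> (\<delta>\<^sup>2)\<^sup>2" by (intro power_mono) auto
    then have "t0 - \<mu> * (\<delta>\<^sup>2)\<^sup>2 \<le> t0 - \<mu> * (\<delta>\<^sup>2 - (norm x)\<^sup>2)\<^sup>2"
      using assms(2) by (simp add: mult_left_mono)
    then have "\<psi>0 \<le> \<psi> (t0 - \<mu> * (\<delta>\<^sup>2 - (norm x)\<^sup>2)\<^sup>2)"
      unfolding \<psi>0_def using assms(2,3) mono diff_mult_power2_less by blast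
    then show ?thesis
      unfolding barrier_def using assms(1) \<open>0 < \<psi>0\<close> \<open>0 < \<psi> t0\<close> by (simp add: mult_left_mono)
  qed
  show "l * \<psi>0 / (2 * \<psi> t0) * \<psi> t < barrier \<psi> l \<mu> \<delta> x t"
    if "norm x = \<delta>" "t0 \<le> t" "t < T" for x :: "real^'n" and t
  proof -
    have "l * \<psi>0 / (2 * \<psi> t0) \<le> l / 2"
      using assms(1) \<open>\<psi>0 \<le> \<psi> t0\<close> \<open>0 < \<psi> t0\<close> by (simp add: field_simps)
    then have "l * \<psi>0 / (2 * \<psi> t0) * \<psi> t \<le> l / 2 * \<psi> t"
      using pos[OF that(3)] by (intro mult_right_mono) auto
    also have "\<dots> < l * \<psi> t" using assms(1) pos[OF that(3)] by simp
    finally show ?thesis unfolding barrier_def using that(1) by simp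
  qed
qed

lemma barrier_comparison:
  fixes v :: "real^'n \<Rightarrow> real \<Rightarrow> real" and g :: "real \<Rightarrow> real"
  assumes "\<mu> \<ge> 0" "T2 < t0" and "C21_on v \<delta> T2 T"
    and sub: "\<And>x t. x \<in> cball 0 \<delta> \<Longrightarrow> t \<in> {T2<..<T} \<Longrightarrow>
      \<bar>time_deriv v x t - laplacian v x t\<bar> \<le> g \<bar>v x t\<bar>"
    and super: "\<And>(x :: real^'n) t. x \<in> cball 0 \<delta> \<Longrightarrow> t0 \<le> t \<Longrightarrow> t < T \<Longrightarrow>
      g \<bar>barrier \<psi> l \<mu> \<delta> x t\<bar> < time_deriv (barrier \<psi> l \<mu> \<delta>) x t - laplacian (barrier \<psi> l \<mu> \<delta>) x t"
    and init: "\<And>x :: real^'n. x \<in> cball 0 \<delta> \<Longrightarrow> \<bar>v x t0\<bar> < barrier \<psi> l \<mu> \<delta> x t0"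
    and lateral: "\<And>(x :: real^'n) t. norm x = \<delta> \<Longrightarrow> t0 \<le> t \<Longrightarrow> t < T \<Longrightarrow> \<bar>v x t\<bar> < barrier \<psi> l \<mu> \<delta> x t"
    and "x \<in> cball 0 \<delta>" "t0 \<le> t" "t < T"
  shows "\<bar>v x t\<bar> \<le> barrier \<psi> l \<mu> \<delta> x t"
proof (rule heat_comparison[where v = v and w = "barrier \<psi> l \<mu> \<delta>" and g = g and t\<^sub>0 = t0])
  have "cball 0 \<delta> \<times> {t0..<T} \<subseteq> cball 0 \<delta> \<times> {T2<..<T}" using \<open>T2 < t0\<close> by auto
  then show "continuous_on (cball 0 \<delta> \<times> {t0..<T}) (\<lambda>(x, t). v x t)"
    using \<open>C21_on v \<delta> T2 T\<close> unfolding C21_on_def by (blast intro: continuous_on_subset)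
  show "continuous_on (cball 0 \<delta> \<times> {t0..<T}) (\<lambda>(x, t). barrier \<psi> l \<mu> \<delta> x t)"
    using assms(1) by (intro continuous_on_subset[OF continuous_on_barrier[where S = "cball 0 \<delta>"]]) auto
  show "heat_differentiable_at v x t \<and> heat_differentiable_at (barrier \<psi> l \<mu> \<delta>) x t"
    if "x \<in> ball 0 \<delta>" "t \<in> {t0<..<T}" for x t
    using C21_on_imp_heat_differentiable_at[OF \<open>C21_on v \<delta> T2 T\<close>, of x t]
      barrier_heat_derivatives(1)[OF assms(1)] that \<open>T2 < t0\<close> by auto
  show "g \<bar>barrier \<psi> l \<mu> \<delta> x t\<bar> < time_deriv (barrier \<psi> l \<mu> \<delta>) x t - laplacian (barrier \<psi> l \<mu> \<delta>) x t"
    if "x \<in> ball 0 \<delta>" "t \<in> {t0<..<T}" for x :: "real^'n" and t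
    using that by (intro super) auto
qed (use assms in auto)

end

context blowup_solution
begin

lemma source_deriv_mult_le:
  assumes "t0 \<le> \<tau>" "\<tau> < T" "0 \<le> s" "s \<le> T - \<tau>"
    and rate: "\<And>\<tau>. t0 \<le> \<tau> \<Longrightarrow> \<tau> < T \<Longrightarrow> (T - \<tau>) * (source p a (\<psi> \<tau>) / \<psi> \<tau>) \<le> B"
  shows "source_deriv p a (\<psi> \<tau>) * s \<le> (p + 2 * \<bar>a\<bar> / ln 2) * B"
proof -
  define K where "K = p + 2 * \<bar>a\<bar> / ln 2"
  have "K > 0" unfolding K_def using exponent_gt_one by (simp add: add_pos_nonneg)
  have "\<psi> \<tau> > 0" using pos[OF assms(2)] .
  then have "source p a (\<psi> \<tau>) / \<psi> \<tau> > 0" using source_pos by simp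
  have "source_deriv p a (\<psi> \<tau>) * s \<le> K * (source p a (\<psi> \<tau>) / \<psi> \<tau>) * s"
    using source_deriv_le[OF \<open>\<psi> \<tau> > 0\<close>] assms(3) unfolding K_def by (rule mult_right_mono)
  also have "\<dots> \<le> K * (source p a (\<psi> \<tau>) / \<psi> \<tau>) * (T - \<tau>)"
    using assms(4) mult_pos_pos[OF \<open>K > 0\<close> \<open>source p a (\<psi> \<tau>) / \<psi> \<tau> > 0\<close>]
    by (intro mult_left_mono) simp_all
  also have "\<dots> = K * ((T - \<tau>) * (source p a (\<psi> \<tau>) / \<psi> \<tau>))"
    by simp
  also have "\<dots> \<le> K * B"
    using rate[OF assms(1,2)] \<open>K > 0\<close> by (intro mult_left_mono) auto
  finally show ?thesis unfolding K_def .
qed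

lemma barrier_laplacian_le:
  fixes x :: "real^'n"
  assumes "l > 0" "\<mu> > 0" "B \<ge> 0" "x \<in> cball 0 \<delta>" "t < T" "t0 + \<mu> * (\<delta>\<^sup>2)\<^sup>2 \<le> t"
    and rate: "\<And>\<tau>. t0 \<le> \<tau> \<Longrightarrow> \<tau> < T \<Longrightarrow> (T - \<tau>) * (source p a (\<psi> \<tau>) / \<psi> \<tau>) \<le> B"
    and small: "16 * \<mu> * \<delta>\<^sup>2 * ((p + 2 * \<bar>a\<bar> / ln 2) * B) \<le> 1 / 4" "4 * \<mu> * CARD('n) * \<delta>\<^sup>2 \<le> 1 / 4"
  shows "laplacian (barrier \<psi> l \<mu> \<delta>) x t \<le> time_deriv (barrier \<psi> l \<mu> \<delta>) x t / 2"
proof -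
  define q where "q = \<delta>\<^sup>2 - (norm x)\<^sup>2"
  define \<tau> where "\<tau> = t - \<mu> * q\<^sup>2"
  define F where "F = source p a (\<psi> \<tau>)"
  define F' where "F' = source_deriv p a (\<psi> \<tau>)"
  have "(norm x)\<^sup>2 \<le> \<delta>\<^sup>2" using assms(4) by (simp add: power_mono)
  then have q: "0 \<le> q" "q \<le> \<delta>\<^sup>2" unfolding q_def by simp_all
  then have "\<mu> * q\<^sup>2 \<le> \<mu> * (\<delta>\<^sup>2)\<^sup>2" using assms(2) by (intro mult_left_mono power_mono) auto
  moreover have "0 \<le> \<mu> * q\<^sup>2" using assms(2) by simp
  ultimately have \<tau>: "t0 \<le> \<tau>" "\<tau> < T" "\<mu> * q\<^sup>2 \<le> T - \<tau>"
    using assms(5,6) unfolding \<tau>_def by linarith+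
  have KB: "F' * (\<mu> * q\<^sup>2) \<le> (p + 2 * \<bar>a\<bar> / ln 2) * B"
    unfolding F'_def using source_deriv_mult_le[OF \<tau>(1,2) _ \<tau>(3) rate] assms(2) by simp
  have "0 \<le> (p + 2 * \<bar>a\<bar> / ln 2) * B"
    using assms(3) exponent_gt_one by simp
  have "F' * (16 * \<mu>\<^sup>2 * q\<^sup>2 * (norm x)\<^sup>2) = 16 * \<mu> * (norm x)\<^sup>2 * (F' * (\<mu> * q\<^sup>2))"
    by (simp add: power2_eq_square)
  also have "\<dots> \<le> 16 * \<mu> * (norm x)\<^sup>2 * ((p + 2 * \<bar>a\<bar> / ln 2) * B)"
    using KB assms(2) by (intro mult_left_mono) auto
  also have "\<dots> \<le> 16 * \<mu> * \<delta>\<^sup>2 * ((p + 2 * \<bar>a\<bar> / ln 2) * B)"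
    using \<open>0 \<le> (p + 2 * \<bar>a\<bar> / ln 2) * B\<close> \<open>(norm x)\<^sup>2 \<le> \<delta>\<^sup>2\<close> assms(2)
    by (intro mult_right_mono) auto
  finally have term1: "F' * (16 * \<mu>\<^sup>2 * q\<^sup>2 * (norm x)\<^sup>2) \<le> 1 / 4"
    using small(1) by linarith
  have "CARD('n) * q - 2 * (norm x)\<^sup>2 \<le> CARD('n) * \<delta>\<^sup>2"
    using mult_left_mono[OF q(2), of "CARD('n)"] zero_le_power2[of "norm x"] by linarith
  then have "4 * \<mu> * (CARD('n) * q - 2 * (norm x)\<^sup>2) \<le> 4 * \<mu> * (CARD('n) * \<delta>\<^sup>2)"
    using assms(2) by (intro mult_left_mono) auto
  then have term2: "4 * \<mu> * (CARD('n) * q - 2 * (norm x)\<^sup>2) \<le> 1 / 4"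
    using small(2) by (simp add: algebra_simps)
  have "F > 0" unfolding F_def using source_pos pos[OF \<tau>(2)] .
  have "laplacian (barrier \<psi> l \<mu> \<delta>) x t
      = l * F * (F' * (16 * \<mu>\<^sup>2 * q\<^sup>2 * (norm x)\<^sup>2) + 4 * \<mu> * (CARD('n) * q - 2 * (norm x)\<^sup>2))"
    using barrier_heat_derivatives(3)[where x = x and \<delta> = \<delta> and l = l and \<mu> = \<mu> and t = t] assms(2,5)
    unfolding F_def F'_def \<tau>_def q_def by simp
  also have "\<dots> \<le> l * F * (1 / 2)"
    using term1 term2 assms(1) \<open>F > 0\<close> by (intro mult_left_mono) auto
  also have "l * F = time_deriv (barrier \<psi> l \<mu> \<delta>) x t"
    using barrier_heat_derivatives(2)[where x = x and \<delta> = \<delta> and l = l and \<mu> = \<mu> and t = t] assms(2,5)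
    unfolding F_def \<tau>_def q_def by simp
  finally show ?thesis by simp
qed

lemma barrier_strict_supersolution:
  fixes \<delta> :: real
  assumes "C > 0" "t0 < T"
  obtains l \<mu> where "l > 0" "\<mu> > 0"
    "\<And>(x :: real^'n) t. x \<in> cball 0 \<delta> \<Longrightarrow> t0 \<le> t \<Longrightarrow> t < T \<Longrightarrow>
      C * source p a \<bar>barrier \<psi> l \<mu> \<delta> x t\<bar>
        < time_deriv (barrier \<psi> l \<mu> \<delta>) x t - laplacian (barrier \<psi> l \<mu> \<delta>) x t"
proof -
  obtain l where "l > 0" and scaling: "\<And>y. y > 0 \<Longrightarrow> C * source p a (l * y) \<le> l * source p a y / 4"
    using source_scaling[OF assms(1) exponent_gt_one] by blast
  have "t0 - (\<delta>\<^sup>2)\<^sup>2 < T" using diff_mult_power2_less[of 1 t0 T "\<delta>\<^sup>2"] assms(2) by simp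
  then obtain B where "B \<ge> 0"
    and rate: "\<And>\<tau>. t0 - (\<delta>\<^sup>2)\<^sup>2 \<le> \<tau> \<Longrightarrow> \<tau> < T \<Longrightarrow> (T - \<tau>) * (source p a (\<psi> \<tau>) / \<psi> \<tau>) \<le> B"
    by (rule remaining_time_bounded) blast
  define K where "K = p + 2 * \<bar>a\<bar> / ln 2"
  define N where "N = real CARD('n)"
  define \<mu> where "\<mu> = 1 / (64 * \<delta>\<^sup>2 * K * B + 16 * N * \<delta>\<^sup>2 + 1)"
  have "0 \<le> \<delta>\<^sup>2 * K * B" "0 \<le> N * \<delta>\<^sup>2"
    using \<open>B \<ge> 0\<close> exponent_gt_one unfolding K_def N_def by simp_all
  then have \<mu>: "0 < \<mu>" "\<mu> \<le> 1" "16 * \<mu> * \<delta>\<^sup>2 * K * B \<le> 1 / 4" "4 * \<mu> * N * \<delta>\<^sup>2 \<le> 1 / 4"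
    unfolding \<mu>_def by (simp_all add: field_simps)
  show ?thesis
  proof (rule that[OF \<open>l > 0\<close> \<open>0 < \<mu>\<close>])
    fix x :: "real^'n" and t
    assume x: "x \<in> cball 0 \<delta>" and t: "t0 \<le> t" "t < T"
    define \<tau> where "\<tau> = t - \<mu> * (\<delta>\<^sup>2 - (norm x)\<^sup>2)\<^sup>2"
    have "\<psi> \<tau> > 0" unfolding \<tau>_def using pos diff_mult_power2_less \<mu>(1) t(2) by simp
    have time: "time_deriv (barrier \<psi> l \<mu> \<delta>) x t = l * source p a (\<psi> \<tau>)"
      using barrier_heat_derivatives(2)[where x = x and \<delta> = \<delta> and l = l and \<mu> = \<mu> and t = t] \<mu>(1) t
      unfolding \<tau>_def by simp
    have "(t0 - (\<delta>\<^sup>2)\<^sup>2) + \<mu> * (\<delta>\<^sup>2)\<^sup>2 \<le> t"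
      using \<mu>(2) t(1) mult_right_mono[OF \<mu>(2), of "(\<delta>\<^sup>2)\<^sup>2"] by simp
    then have "laplacian (barrier \<psi> l \<mu> \<delta>) x t \<le> l * source p a (\<psi> \<tau>) / 2"
      using barrier_laplacian_le[OF \<open>l > 0\<close> \<mu>(1) \<open>B \<ge> 0\<close> x t(2) _ rate] \<mu>(3,4) time
      unfolding K_def N_def by (simp add: ac_simps)
    moreover have "C * source p a \<bar>barrier \<psi> l \<mu> \<delta> x t\<bar> \<le> l * source p a (\<psi> \<tau>) / 4"
      using scaling[OF \<open>\<psi> \<tau> > 0\<close>] \<open>l > 0\<close> \<open>\<psi> \<tau> > 0\<close> unfolding barrier_def \<tau>_def by simp
    moreover have "0 < l * source p a (\<psi> \<tau>)"
      using \<open>l > 0\<close> source_pos[OF \<open>\<psi> \<tau> > 0\<close>] by simp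
    ultimately show "C * source p a \<bar>barrier \<psi> l \<mu> \<delta> x t\<bar>
        < time_deriv (barrier \<psi> l \<mu> \<delta>) x t - laplacian (barrier \<psi> l \<mu> \<delta>) x t"
      using time by linarith
  qed
qed

lemma small_solutions_do_not_blow_up:
  fixes \<delta> :: real
  assumes "C > 0" "T2 < T" "\<delta> > 0"
  obtains \<epsilon> where "\<epsilon> > 0"
    "\<And>v :: real^'n \<Rightarrow> real \<Rightarrow> real. C21_on v \<delta> T2 T \<Longrightarrow>
      (\<And>x t. x \<in> cball 0 \<delta> \<Longrightarrow> t \<in> {T2<..<T} \<Longrightarrow>
        \<bar>time_deriv v x t - laplacian v x t\<bar> \<le> C * source p a \<bar>v x t\<bar>) \<Longrightarrow>
      (\<And>x t. x \<in> cball 0 \<delta> \<Longrightarrow> t \<in> {T2<..<T} \<Longrightarrow> \<bar>v x t\<bar> \<le> \<epsilon> * \<psi> t) \<Longrightarrow>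
      \<not> blows_up_at v T"
proof -
  define t0 where "t0 = (T2 + T) / 2"
  have t0: "T2 < t0" "t0 < T" using assms(2) unfolding t0_def by simp_all
  obtain l \<mu> where "l > 0" "\<mu> > 0" and super: "\<And>(x :: real^'n) t. x \<in> cball 0 \<delta> \<Longrightarrow> t0 \<le> t \<Longrightarrow> t < T \<Longrightarrow>
      C * source p a \<bar>barrier \<psi> l \<mu> \<delta> x t\<bar>
        < time_deriv (barrier \<psi> l \<mu> \<delta>) x t - laplacian (barrier \<psi> l \<mu> \<delta>) x t"
    using barrier_strict_supersolution[OF assms(1) t0(2)] by blast
  obtain \<epsilon> where "\<epsilon> > 0"
    and init: "\<And>x :: real^'n. x \<in> cball 0 \<delta> \<Longrightarrow> \<epsilon> * \<psi> t0 < barrier \<psi> l \<mu> \<delta> x t0"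
    and lateral: "\<And>(x :: real^'n) t. norm x = \<delta> \<Longrightarrow> t0 \<le> t \<Longrightarrow> t < T \<Longrightarrow> \<epsilon> * \<psi> t < barrier \<psi> l \<mu> \<delta> x t"
    using small_multiple_below_barrier[OF \<open>l > 0\<close> _ t0(2), where \<mu> = \<mu> and \<delta> = \<delta>] \<open>\<mu> > 0\<close> by auto
  show ?thesis
  proof (rule that[OF \<open>\<epsilon> > 0\<close>])
    fix v :: "real^'n \<Rightarrow> real \<Rightarrow> real"
    assume v: "C21_on v \<delta> T2 T"
      and sub: "\<And>x t. x \<in> cball 0 \<delta> \<Longrightarrow> t \<in> {T2<..<T} \<Longrightarrow>
        \<bar>time_deriv v x t - laplacian v x t\<bar> \<le> C * source p a \<bar>v x t\<bar>"
      and small: "\<And>x t. x \<in> cball 0 \<delta> \<Longrightarrow> t \<in> {T2<..<T} \<Longrightarrow> \<bar>v x t\<bar> \<le> \<epsilon> * \<psi> t"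
    show "\<not> blows_up_at v T"
    proof (rule not_blows_up_at_if_bounded[OF _ t0(2)])
      fix x :: "real^'n" and t
      assume x: "norm x < \<delta> / 2" and t: "t0 < t" "t < T"
      then have "norm x \<le> \<delta>" using norm_ge_zero[of x] by linarith
      have "\<bar>v x t\<bar> \<le> barrier \<psi> l \<mu> \<delta> x t"
      proof (rule barrier_comparison[OF _ t0(1) v sub super])
        show "\<bar>v y t0\<bar> < barrier \<psi> l \<mu> \<delta> y t0" if "y \<in> cball 0 \<delta>" for y :: "real^'n"
          using small[OF that] init[OF that] t0 by fastforce
        show "\<bar>v y s\<bar> < barrier \<psi> l \<mu> \<delta> y s" if "norm y = \<delta>" "t0 \<le> s" "s < T" for y :: "real^'n" and s
          using small[of y s] lateral[OF that] that t0 by fastforce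
      qed (use \<open>\<mu> > 0\<close> \<open>norm x \<le> \<delta>\<close> t in auto)
      also have "\<dots> \<le> l * \<psi> (T - \<mu> * (\<delta>\<^sup>2 - (\<delta> / 2)\<^sup>2)\<^sup>2)"
        using barrier_le_near_centre[of l \<mu> "\<delta> / 2" \<delta> x t] \<open>l > 0\<close> \<open>\<mu> > 0\<close> assms(3) x t by simp
      finally show "\<bar>v x t\<bar> \<le> l * \<psi> (T - \<mu> * (\<delta>\<^sup>2 - (\<delta> / 2)\<^sup>2)\<^sup>2)" .
    qed (use assms(3) in simp)
  qed
qed

end

theorem lemmaA4:
  fixes p \<alpha> C T :: real and \<psi> :: "real \<Rightarrow> real"
  assumes "p > 1" and "C > 0" and "T > 0"
    and psi_pos: "\<forall>t<T. \<psi> t > 0"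
    and psi_ode: "\<forall>t<T. (\<psi> has_real_derivative (\<psi> t powr p * (ln ((\<psi> t)\<^sup>2 + 2)) powr \<alpha>)) (at t)"
    and psi_blowup: "filterlim \<psi> at_top (at_left T)"
  shows "\<forall>T2 < T. \<forall>\<delta> > 0. \<exists>\<epsilon> > 0. \<forall>v :: real^'n \<Rightarrow> real \<Rightarrow> real.
           C21_on v \<delta> T2 T \<and>
           (\<forall>x\<in>cball 0 \<delta>. \<forall>t\<in>{T2<..<T}.
              \<bar>time_deriv v x t - laplacian v x t\<bar> \<le> C * \<bar>v x t\<bar> powr p * (ln ((v x t)\<^sup>2 + 2)) powr \<alpha>
              \<and> \<bar>v x t\<bar> \<le> \<epsilon> * \<psi> t)
           \<longrightarrow> \<not> blows_up_at v T"
proof (intro allI impI)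
  fix T2 \<delta> :: real
  assume "T2 < T" "\<delta> > 0"
  interpret blowup_solution p \<alpha> T \<psi>
    using assms by unfold_locales (simp_all add: source_def)
  obtain \<epsilon> where "\<epsilon> > 0" and no_blowup: "\<And>v :: real^'n \<Rightarrow> real \<Rightarrow> real. C21_on v \<delta> T2 T \<Longrightarrow>
      (\<And>x t. x \<in> cball 0 \<delta> \<Longrightarrow> t \<in> {T2<..<T} \<Longrightarrow>
        \<bar>time_deriv v x t - laplacian v x t\<bar> \<le> C * source p \<alpha> \<bar>v x t\<bar>) \<Longrightarrow>
      (\<And>x t. x \<in> cball 0 \<delta> \<Longrightarrow> t \<in> {T2<..<T} \<Longrightarrow> \<bar>v x t\<bar> \<le> \<epsilon> * \<psi> t) \<Longrightarrow>
      \<not> blows_up_at v T"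
    using small_solutions_do_not_blow_up[OF \<open>C > 0\<close> \<open>T2 < T\<close> \<open>\<delta> > 0\<close>] by blast
  show "\<exists>\<epsilon>>0. \<forall>v :: real^'n \<Rightarrow> real \<Rightarrow> real. C21_on v \<delta> T2 T \<and>
      (\<forall>x\<in>cball 0 \<delta>. \<forall>t\<in>{T2<..<T}.
        \<bar>time_deriv v x t - laplacian v x t\<bar> \<le> C * \<bar>v x t\<bar> powr p * (ln ((v x t)\<^sup>2 + 2)) powr \<alpha>
        \<and> \<bar>v x t\<bar> \<le> \<epsilon> * \<psi> t)
      \<longrightarrow> \<not> blows_up_at v T"
    using \<open>\<epsilon> > 0\<close> no_blowup by (auto simp: source_def mult.assoc)
qed

end
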